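(* Let $f\in\mathrm{Homeo}_+(\mathbb{R})$ satisfy $f(x+1)=f(x)+2$ for all $x$ and $f(0)=0$, and let $\theta_f$ be defined on $PL_2(\mathbb{R})$ as in the context. Then $\theta_f:PL_2(\mathbb{R})\to\mathrm{Homeo}_+(\mathbb{R})$ is a group homomorphism.
   Context: $\mathbb{Q}_2$ denotes the dyadic rationals. $GA(\mathbb{Q}_2)$ is the group of affine maps $x\mapsto 2^nx+r$ ($n\in\mathbb{Z}$, $r\in\mathbb{Q}_2$); $T_r(x)=x+r$, $D(x)=2x$. There is a unique injective homomorphism $\theta_f:GA(\mathbb{Q}_2)\to\mathrm{Homeo}_+(\mathbb{R})$ with $\theta_f(T_1)=T_1$, $\theta_f(D)=f$. For $r=p/2^q\in\mathbb{Q}_2$ put $\bar r=f^{-q}(p)$ (well defined, strictly increasing). $PL_2(\mathbb{R})$ is the group of homeomorphisms $h$ of $\mathbb{R}$ that are piecewise linear with a locally finite set of break points, all in $\mathbb{Q}_2$, such that near each non-break point $h$ agrees with an element of $GA(\mathbb{Q}_2)$. For $h\in PL_2(\mathbb{R})$ choose a strictly increasing sequence $(x_n)_{n\in\mathbb{Z}}$ in $\mathbb{Q}_2$ with $x_n\to\pm\infty$ as $n\to\pm\infty$ and $\gamma_n\in GA(\mathbb{Q}_2)$ with $h=\gamma_n$ on $[x_n,x_{n+1}]$, and define $\theta_f(h)(t)=\theta_f(\gamma_n)(t)$ for $t\in[\bar x_n,\bar x_{n+1})$; this is independent of the choices and yields an increasing homeomorphism of $\mathbb{R}$. *)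

theory Defs
  imports "HOL-Analysis.Analysis"
begin

definition dyadic :: "real \<Rightarrow> bool" where
  "dyadic r \<longleftrightarrow> (\<exists>(p::int) (q::nat). r = real_of_int p / 2 ^ q)"

definition dyrep :: "real \<Rightarrow> int \<times> nat" where
  "dyrep r = (SOME (p, q). r = real_of_int p / 2 ^ q)"

definition fpow :: "(real \<Rightarrow> real) \<Rightarrow> int \<Rightarrow> real \<Rightarrow> real" where
  "fpow f n = (if 0 \<le> n then f ^^ nat n else (inv f) ^^ nat (- n))"

definition HomeoPlus :: "(real \<Rightarrow> real) set" where
  "HomeoPlus = {h. (\<exists>g. homeomorphism UNIV UNIV h g) \<and> strict_mono h}"

text \<open>Elements of GA(Q_2): a pair (n, r) codes x |-> 2^n x + r, r dyadic.\<close>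
definition GA :: "(int \<times> real) set" where
  "GA = {(n, r). dyadic r}"

definition GA_app :: "int \<times> real \<Rightarrow> real \<Rightarrow> real" where
  "GA_app g x = 2 powi (fst g) * x + snd g"

text \<open>theta_f on GA(Q_2): theta_f(T_1) = T_1, theta_f(D) = f; hence
  theta_f(T_r o D^n) = theta_f(D^-q o T_p o D^q) o f^n = f^-q o T_p o f^q o f^n for r = p/2^q.\<close>
definition theta_GA :: "(real \<Rightarrow> real) \<Rightarrow> int \<times> real \<Rightarrow> real \<Rightarrow> real" where
  "theta_GA f g t =
     (case dyrep (snd g) of (p, q) \<Rightarrow>
        fpow f (- int q) (fpow f (int q) (fpow f (fst g) t) + real_of_int p))"

definition dybar :: "(real \<Rightarrow> real) \<Rightarrow> real \<Rightarrow> real" where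
  "dybar f r = (case dyrep r of (p, q) \<Rightarrow> fpow f (- int q) (real_of_int p))"

definition PL2 :: "(real \<Rightarrow> real) set" where
  "PL2 = {h. (\<exists>g. homeomorphism UNIV UNIV h g) \<and>
              (\<exists>B. (\<forall>b\<in>B. dyadic b) \<and> (\<forall>a c. finite (B \<inter> {a..c})) \<and>
                   (\<forall>x. x \<notin> B \<longrightarrow>
                      (\<exists>\<gamma>\<in>GA. \<exists>e>0. \<forall>y\<in>ball x e. h y = GA_app \<gamma> y)))}"

definition PL_data :: "(real \<Rightarrow> real) \<Rightarrow> (int \<Rightarrow> real) \<Rightarrow> (int \<Rightarrow> int \<times> real) \<Rightarrow> bool" where
  "PL_data h xs gs \<longleftrightarrow> strict_mono xs \<and> (\<forall>n. dyadic (xs n)) \<and>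
     filterlim xs at_top at_top \<and> filterlim xs at_bot at_bot \<and>
     (\<forall>n. gs n \<in> GA) \<and>
     (\<forall>n. \<forall>y\<in>{xs n..xs (n + 1)}. h y = GA_app (gs n) y)"

definition theta_PL :: "(real \<Rightarrow> real) \<Rightarrow> (real \<Rightarrow> real) \<Rightarrow> real \<Rightarrow> real" where
  "theta_PL f h t =
     (case (SOME d. PL_data h (fst d) (snd d)) of (xs, gs) \<Rightarrow>
        theta_GA f (gs (SOME n. dybar f (xs n) \<le> t \<and> t < dybar f (xs (n + 1)))) t)"

end

theory Submission
  imports Defs
begin

text \<open>Since f T_1 f^-1 = T_2 mirrors D T_1 D^-1 = T_2, theta_f is a homomorphism on GA(Q_2), and
  theta_f(gamma)(x-bar) = (gamma x)-bar for dyadic x, where x |-> x-bar is strictly increasing.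
  An h in PL_2(R) is glued from affine pieces gamma_n on [x_n, x_(n+1)], and theta_f(h) is glued
  from the increasing homeomorphisms theta_f(gamma_n) on [x_n-bar, x_(n+1)-bar]; at the endpoints
  both neighbouring pieces take the value h(x_n)-bar, so theta_f(h) is an increasing
  homeomorphism. For composition, near any t the map h is some gamma on a dyadic interval and g is
  some delta near theta_f(gamma)(t); then g o h = delta gamma on a smaller dyadic interval whose
  bar-image still contains t, and theta_f(delta gamma) = theta_f(delta) theta_f(gamma).\<close>

lemma strict_mono_intI:
  fixes a :: "int \<Rightarrow> 'a::order"
  assumes "\<And>k. a k < a (k + 1)"
  shows "strict_mono a"
proof (rule strict_monoI)
  fix m n :: int
  assume "m < n"
  then obtain j where n: "n = m + int (Suc j)"
    by (metis zless_iff_Suc_zadd)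
  have "a m < a (m + int (Suc j))" for j
  proof (induction j)
    case (Suc j)
    have "m + int (Suc (Suc j)) = (m + int (Suc j)) + 1"
      by simp
    then show ?case
      using Suc assms[of "m + int (Suc j)"] by (metis order.strict_trans)
  qed (use assms in simp)
  then show "a m < a n"
    using n by simp
qed

lemma strict_mono_int_bracket:
  fixes a :: "int \<Rightarrow> real"
  assumes "strict_mono a" "filterlim a at_top at_top" "filterlim a at_bot at_bot"
  shows "\<exists>!n. a n \<le> u \<and> u < a (n + 1)"
proof (rule ex_ex1I)
  obtain n0 where n0: "a n0 \<le> u"
    using assms(3) unfolding filterlim_at_bot eventually_at_bot_linorder by blast
  obtain N where N: "\<And>n. n \<ge> N \<Longrightarrow> u < a n"
    using assms(2) unfolding filterlim_at_top_dense eventually_at_top_linorder by blast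
  define k where "k = (LEAST k. u < a (n0 + int k))"
  have above: "u < a (n0 + int k)"
    unfolding k_def by (rule LeastI[of _ "nat (N - n0)"]) (simp add: N)
  then have "k \<noteq> 0"
    using n0 by (cases k) auto
  then have "\<not> u < a (n0 + int (k - 1))"
    using not_less_Least[of "k - 1" "\<lambda>k. u < a (n0 + int k)"] by (simp add: k_def)
  then show "\<exists>n. a n \<le> u \<and> u < a (n + 1)"
    using above \<open>k \<noteq> 0\<close> by (intro exI[of _ "n0 + int k - 1"]) (simp add: algebra_simps)
next
  fix n m
  assume "a n \<le> u \<and> u < a (n + 1)" "a m \<le> u \<and> u < a (m + 1)"
  then have "\<not> n + 1 \<le> m" "\<not> m + 1 \<le> n"
    by (auto simp: strict_mono_less_eq[OF assms(1), symmetric])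
  then show "n = m"
    by simp
qed

lemma strict_mono_surj_filterlim:
  fixes g :: "real \<Rightarrow> real"
  assumes "strict_mono g" "surj g"
  shows "filterlim g at_top at_top" "filterlim g at_bot at_bot"
proof -
  have mono: "\<And>x y. x \<le> y \<Longrightarrow> g x \<le> g y"
    using assms(1) by (simp add: strict_mono_less_eq)
  have right: "\<And>y. g (inv g y) = y"
    using assms(2) by (simp add: surj_f_inv_f)
  show "filterlim g at_top at_top"
    unfolding filterlim_at_top eventually_at_top_linorder by (metis mono right)
  show "filterlim g at_bot at_bot"
    unfolding filterlim_at_bot eventually_at_bot_linorder by (metis mono right)
qed

lemma strict_mono_surj_HomeoPlus:
  fixes g :: "real \<Rightarrow> real"
  assumes "strict_mono g" "surj g"
  shows "g \<in> HomeoPlus"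
proof -
  have cont: "continuous_on UNIV k" if "strict_mono k" "surj k" for k :: "real \<Rightarrow> real"
    by (rule continuous_onI_mono) (use that in \<open>auto simp: strict_mono_less_eq\<close>)
  have inj: "inj g"
    using assms(1) strict_mono_imp_inj_on by blast
  have right: "g (inv g y) = y" for y
    using assms(2) by (simp add: surj_f_inv_f)
  have "strict_mono (inv g)"
    by (rule strict_monoI) (metis right assms(1) strict_mono_less)
  moreover have "surj (inv g)"
    using inj by (metis inv_f_f surjI)
  ultimately have "homeomorphism UNIV UNIV g (inv g)"
    unfolding homeomorphism_def using cont assms inj right
    by (auto simp: surj_iff_all)
  then show ?thesis
    unfolding HomeoPlus_def using assms(1) by blast
qed

lemma strict_mono_piecewise:
  fixes T :: "real \<Rightarrow> real" and X :: "int \<Rightarrow> real"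
  assumes X: "strict_mono X" "filterlim X at_top at_top" "filterlim X at_bot at_bot"
    and pieces: "\<And>n. strict_mono_on {X n..X (n + 1)} T"
  shows "strict_mono T"
proof (rule strict_monoI)
  have "strict_mono (\<lambda>n. T (X n))"
  proof (rule strict_mono_intI)
    fix k
    show "T (X k) < T (X (k + 1))"
      using pieces[of k] strict_monoD[OF X(1), of k "k + 1"] by (simp add: strict_mono_on_def)
  qed
  fix s t :: real
  assume "s < t"
  obtain m n where m: "X m \<le> s" "s < X (m + 1)" and n: "X n \<le> t" "t < X (n + 1)"
    using strict_mono_int_bracket[OF X] by meson
  have "\<not> n + 1 \<le> m"
    using m n \<open>s < t\<close> strict_mono_less_eq[OF X(1)] by (metis le_less_trans not_le order.strict_trans)
  then consider "m = n" | "m + 1 \<le> n"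
    by linarith
  then show "T s < T t"
  proof cases
    case 1
    then show ?thesis
      using pieces[of m] m n \<open>s < t\<close> by (auto simp: strict_mono_on_def)
  next
    case 2
    have "T s < T (X (m + 1))"
      using pieces[of m] m by (auto simp: strict_mono_on_def)
    also have "\<dots> \<le> T (X n)"
      using 2 strict_mono_less_eq[OF \<open>strict_mono (\<lambda>n. T (X n))\<close>] by simp
    also have "\<dots> \<le> T t"
      using strict_mono_on_leD[OF pieces[of n]] n by simp
    finally show ?thesis .
  qed
qed

lemma piecewise_HomeoPlus:
  fixes T :: "real \<Rightarrow> real" and X :: "int \<Rightarrow> real"
  assumes X: "strict_mono X" "filterlim X at_top at_top" "filterlim X at_bot at_bot"
    and TX: "filterlim (\<lambda>n. T (X n)) at_top at_top" "filterlim (\<lambda>n. T (X n)) at_bot at_bot"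
    and pieces: "\<And>n. strict_mono_on {X n..X (n + 1)} T" "\<And>n. continuous_on {X n..X (n + 1)} T"
  shows "T \<in> HomeoPlus"
proof (rule strict_mono_surj_HomeoPlus)
  show sm: "strict_mono T"
    by (rule strict_mono_piecewise[OF X]) (rule pieces(1))
  show "surj T"
    unfolding surj_def
  proof (rule allI)
    fix u
    have "strict_mono (\<lambda>n. T (X n))"
      using sm X(1) by (simp add: strict_mono_def)
    then obtain n where n: "T (X n) \<le> u" "u < T (X (n + 1))"
      using strict_mono_int_bracket[OF _ TX] by meson
    moreover have "X n \<le> X (n + 1)"
      using strict_mono_less_eq[OF X(1)] by simp
    ultimately show "\<exists>t. u = T t"
      using IVT'[of T "X n" u "X (n + 1)", OF _ _ _ pieces(2)] by (metis less_imp_le)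
  qed
qed

lemma locally_finite_successor:
  fixes C :: "real set"
  assumes fin: "\<And>a c. finite (C \<inter> {a..c})" and ints: "\<And>k::int. of_int k \<in> C"
  obtains nxt where "\<And>x. nxt x \<in> C" "\<And>x. x < nxt x" "\<And>x c. c \<in> C \<Longrightarrow> x < c \<Longrightarrow> nxt x \<le> c"
proof
  define S where "S x = {c \<in> C. x < c \<and> c \<le> x + 1}" for x
  have "finite (S x)" for x
    unfolding S_def by (rule finite_subset[OF _ fin[of x "x + 1"]]) auto
  moreover have "of_int (\<lfloor>x\<rfloor> + 1) \<in> S x" for x
    unfolding S_def using ints[of "\<lfloor>x\<rfloor> + 1"] real_of_int_floor_add_one_gt[of x]
    by simp
  ultimately have Min_S: "Min (S x) \<in> S x" and Min_le: "c \<in> S x \<Longrightarrow> Min (S x) \<le> c" for x c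
    by (auto intro: Min_in)
  show "Min (S x) \<in> C" "x < Min (S x)" for x
    using Min_S(1) unfolding S_def by auto
  show "Min (S x) \<le> c" if "c \<in> C" "x < c" for x c
    using Min_S[of x] Min_le[of c x] that unfolding S_def by (cases "c \<le> x + 1") auto
qed

lemma strict_mono_in_locally_finite_at_top:
  fixes s :: "nat \<Rightarrow> real"
  assumes "strict_mono s" "\<And>n. s n \<in> C" "\<And>a c. finite (C \<inter> {a..c})"
  shows "filterlim s at_top sequentially"
  unfolding filterlim_at_top eventually_sequentially
proof
  fix Z
  have "\<exists>N. Z \<le> s N"
  proof (rule ccontr)
    assume "\<not> ?thesis"
    then have "s n \<le> Z" for n
      by (simp add: not_le less_imp_le)
    then have "range s \<subseteq> C \<inter> {s 0..Z}"
      using assms(1,2) by (auto simp: strict_mono_less_eq)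
    then have "finite (range s)"
      using assms(3) finite_subset by blast
    then show False
      using range_inj_infinite[OF strict_mono_imp_inj_on[OF assms(1)]] by blast
  qed
  then obtain N where "Z \<le> s N" ..
  then have "\<forall>n\<ge>N. Z \<le> s n"
    using strict_mono_less_eq[OF assms(1)] order.trans by blast
  then show "\<exists>N. \<forall>n\<ge>N. Z \<le> s n" ..
qed

lemma strict_mono_vimage_locally_finite:
  fixes h :: "real \<Rightarrow> real"
  assumes "strict_mono h" "\<And>a c. finite (A \<inter> {a..c})"
  shows "finite (h -` A \<inter> {a..c})"
proof (rule finite_subset)
  show "h -` A \<inter> {a..c} \<subseteq> h -` (A \<inter> {h a..h c})"
    using assms(1) by (auto simp: strict_mono_less_eq)
  show "finite (h -` (A \<inter> {h a..h c}))"
    by (rule finite_vimageI[OF assms(2) strict_mono_imp_inj_on[OF assms(1)]])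
qed

lemma locally_finite_upward_enumeration:
  fixes C :: "real set"
  assumes fin: "\<And>a c. finite (C \<inter> {a..c})" and ints: "\<And>k::int. of_int k \<in> C"
  obtains s :: "nat \<Rightarrow> real" where "s 0 = 0" "\<And>n. s n \<in> C" "strict_mono s"
    "\<And>n c. c \<in> C \<Longrightarrow> \<not> (s n < c \<and> c < s (Suc n))" "filterlim s at_top sequentially"
proof -
  obtain nxt where nxt: "\<And>x. nxt x \<in> C" "\<And>x. x < nxt x" "\<And>x c. c \<in> C \<Longrightarrow> x < c \<Longrightarrow> nxt x \<le> c"
    using locally_finite_successor[OF fin ints] by blast
  define s where "s n = (nxt ^^ n) 0" for n
  have s0: "s 0 = 0" and s_Suc: "s (Suc n) = nxt (s n)" for n
    by (simp_all add: s_def)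
  have C: "s n \<in> C" for n
    using ints[of 0] by (cases n) (simp_all add: s0 s_Suc nxt(1))
  have sm: "strict_mono s"
    by (simp add: strict_mono_Suc_iff s_Suc nxt(2))
  have gap: "\<not> (s n < c \<and> c < s (Suc n))" if "c \<in> C" for n c
    unfolding s_Suc using nxt(3)[OF that, of "s n"] by linarith
  show ?thesis
    by (rule that[OF s0 C sm gap strict_mono_in_locally_finite_at_top[OF sm C fin]])
qed

lemma filterlim_two_sided_sequence:
  fixes u d :: "nat \<Rightarrow> real"
  assumes u: "filterlim u at_top sequentially" and d: "filterlim d at_top sequentially"
  defines "xs \<equiv> \<lambda>k::int. if 0 \<le> k then u (nat k) else - d (nat (- k))"
  shows "filterlim xs at_top at_top" "filterlim xs at_bot at_bot"
proof -
  have "filterlim (\<lambda>k. u (nat k)) at_top at_top"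
    by (rule filterlim_compose[OF u filterlim_nat_sequentially])
  moreover have "filterlim (\<lambda>k. u (nat k)) at_top at_top \<longleftrightarrow> filterlim xs at_top at_top"
    by (rule filterlim_cong[OF refl refl]) (simp add: eventually_at_top_linorder xs_def exI[of _ 0])
  ultimately show "filterlim xs at_top at_top"
    by simp
  have "filterlim (\<lambda>k. d (nat k)) at_top at_top"
    by (rule filterlim_compose[OF d filterlim_nat_sequentially])
  then have "filterlim (\<lambda>k. - d (nat k)) at_bot at_top"
    by (rule filterlim_uminus_at_top[THEN iffD1])
  moreover have "filterlim (\<lambda>k. - d (nat k)) at_bot at_top \<longleftrightarrow> filterlim (\<lambda>k. xs (- k)) at_bot at_top"
    by (rule filterlim_cong[OF refl refl]) (simp add: eventually_at_top_linorder xs_def exI[of _ 1])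
  ultimately have "filterlim (\<lambda>k. xs (- k)) at_bot at_top"
    by simp
  then show "filterlim xs at_bot at_bot"
    unfolding filterlim_def at_bot_mirror[where 'a=int] filtermap_filtermap by simp
qed

lemma locally_finite_enumeration:
  fixes C :: "real set"
  assumes fin: "\<And>a c. finite (C \<inter> {a..c})" and ints: "\<And>k::int. of_int k \<in> C"
  obtains xs :: "int \<Rightarrow> real" where "strict_mono xs" "\<And>k. xs k \<in> C"
    "filterlim xs at_top at_top" "filterlim xs at_bot at_bot"
    "\<And>k c. c \<in> C \<Longrightarrow> \<not> (xs k < c \<and> c < xs (k + 1))"
proof -
  obtain u where u: "u 0 = 0" "\<And>n. u n \<in> C" "strict_mono u"
    "\<And>n c. c \<in> C \<Longrightarrow> \<not> (u n < c \<and> c < u (Suc n))" "filterlim u at_top sequentially"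
    using locally_finite_upward_enumeration[OF fin ints] by blast
  have fin': "finite (uminus ` C \<inter> {a..c})" for a c :: real
  proof -
    have "uminus ` C \<inter> {a..c} = uminus ` (C \<inter> {- c..- a})"
      by force
    then show ?thesis
      using fin by simp
  qed
  have ints': "of_int k \<in> uminus ` C" for k
    using ints[of "- k"] by (simp add: image_iff) (metis minus_minus)
  obtain d where d: "d 0 = 0" "\<And>n. d n \<in> uminus ` C" "strict_mono d"
    "\<And>n c. c \<in> uminus ` C \<Longrightarrow> \<not> (d n < c \<and> c < d (Suc n))" "filterlim d at_top sequentially"
    using locally_finite_upward_enumeration[OF fin' ints'] by blast
  define xs where "xs k = (if 0 \<le> k then u (nat k) else - d (nat (- k)))" for k :: int
  have "- d n \<in> C" for n
    using d(2)[of n] by auto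
  then have C: "xs k \<in> C" for k
    using u(2) by (simp add: xs_def)
  have gap: "xs k < xs (k + 1) \<and> (\<forall>c\<in>C. \<not> (xs k < c \<and> c < xs (k + 1)))" for k
  proof (cases "0 \<le> k")
    case True
    then have "xs k = u (nat k)" "xs (k + 1) = u (Suc (nat k))"
      by (simp_all add: xs_def Suc_nat_eq_nat_zadd1 add.commute)
    then show ?thesis
      using u(3,4) by (simp add: strict_mono_Suc_iff)
  next
    case False
    then have "xs k = - d (Suc (nat (- k - 1)))" "xs (k + 1) = - d (nat (- k - 1))"
      using d(1) u(1) by (auto simp: xs_def Suc_nat_eq_nat_zadd1)
    moreover have "\<not> (xs k < c \<and> c < xs (k + 1))" if "c \<in> C" for c
      using d(4)[of "- c" "nat (- k - 1)"] that calculation by auto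
    ultimately show ?thesis
      using d(3) by (simp add: strict_mono_Suc_iff)
  qed
  have sm: "strict_mono xs"
    by (rule strict_mono_intI) (use gap in blast)
  have top: "filterlim xs at_top at_top" and bot: "filterlim xs at_bot at_bot"
    unfolding xs_def[abs_def] using filterlim_two_sided_sequence[OF u(5) d(5)] by auto
  show ?thesis
  proof (rule that[OF sm C top bot])
    fix k c
    assume "c \<in> C"
    then show "\<not> (xs k < c \<and> c < xs (k + 1))"
      using gap[of k] by blast
  qed
qed

lemma dyadic_dyrep: "dyadic r \<Longrightarrow> r = of_int (fst (dyrep r)) / 2 ^ snd (dyrep r)"
  unfolding dyadic_def dyrep_def by (rule someI2_ex) (auto simp: case_prod_beta)

lemma dyadic_frac: "dyadic (of_int p / 2 ^ q)"
  unfolding dyadic_def by blast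

lemma dyadic_of_int [simp]: "dyadic (of_int k)"
  using dyadic_frac[of k 0] by simp

lemma frac_pow2_expand: "(of_int p / 2 ^ q :: real) = of_int (p * 2 ^ j) / 2 ^ (q + j)"
  by (simp add: power_add)

lemma dyadic_common_denominator:
  assumes "dyadic r" "dyadic s"
  obtains p p' q where "r = of_int p / 2 ^ q" "s = of_int p' / 2 ^ q"
proof -
  obtain p q p' q' where "r = of_int p / 2 ^ q" "s = of_int p' / 2 ^ q'"
    using assms unfolding dyadic_def by blast
  then show ?thesis
    using that frac_pow2_expand[of p q q'] frac_pow2_expand[of p' q' q] by (metis add.commute)
qed

lemma dyadic_add: "dyadic r \<Longrightarrow> dyadic s \<Longrightarrow> dyadic (r + s)"
  by (metis add_divide_distrib dyadic_common_denominator dyadic_frac of_int_add)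

lemma dyadic_uminus: "dyadic r \<Longrightarrow> dyadic (- r)"
  unfolding dyadic_def by (metis minus_divide_left of_int_minus)

lemma dyadic_powi_mult:
  assumes "dyadic r"
  shows "dyadic (2 powi n * r)"
proof -
  obtain p q where r: "r = of_int p / 2 ^ q"
    using assms unfolding dyadic_def by blast
  show ?thesis
  proof (cases "n \<ge> 0")
    case True
    then have "2 powi n * r = of_int (2 ^ nat n * p) / 2 ^ q"
      using r by (simp add: power_int_def)
    then show ?thesis by (metis dyadic_frac)
  next
    case False
    then have "2 powi n * r = of_int p / 2 ^ (q + nat (- n))"
      using r by (simp add: power_int_def power_add field_simps)
    then show ?thesis by (metis dyadic_frac)
  qed
qed

definition GA_comp :: "int \<times> real \<Rightarrow> int \<times> real \<Rightarrow> int \<times> real" where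
  "GA_comp g h = (fst g + fst h, 2 powi fst g * snd h + snd g)"

definition GA_inv :: "int \<times> real \<Rightarrow> int \<times> real" where
  "GA_inv g = (- fst g, - (2 powi (- fst g) * snd g))"

lemma GA_app_comp: "GA_app (GA_comp g h) x = GA_app g (GA_app h x)"
  unfolding GA_comp_def GA_app_def by (simp add: power_int_add algebra_simps)

lemma GA_app_inv_left [simp]: "GA_app (GA_inv g) (GA_app g x) = x"
  unfolding GA_inv_def GA_app_def by (simp add: algebra_simps power_int_minus)

lemma GA_app_inv_right [simp]: "GA_app g (GA_app (GA_inv g) x) = x"
  unfolding GA_inv_def GA_app_def by (simp add: algebra_simps power_int_minus)

lemma GA_comp_in_GA: "g \<in> GA \<Longrightarrow> h \<in> GA \<Longrightarrow> GA_comp g h \<in> GA"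
  unfolding GA_comp_def GA_def by (auto intro!: dyadic_add dyadic_powi_mult)

lemma GA_inv_in_GA: "g \<in> GA \<Longrightarrow> GA_inv g \<in> GA"
  unfolding GA_inv_def GA_def by (auto intro!: dyadic_uminus dyadic_powi_mult)

lemma GA_app_less_iff [simp]: "GA_app g x < GA_app g y \<longleftrightarrow> x < y"
  unfolding GA_app_def by simp

lemma GA_app_le_iff [simp]: "GA_app g x \<le> GA_app g y \<longleftrightarrow> x \<le> y"
  unfolding GA_app_def by simp

lemma GA_app_dyadic: "g \<in> GA \<Longrightarrow> dyadic x \<Longrightarrow> dyadic (GA_app g x)"
  unfolding GA_app_def GA_def by (auto intro: dyadic_add dyadic_powi_mult)

lemma continuous_on_GA_app: "continuous_on S (GA_app g)"
  unfolding GA_app_def by (intro continuous_intros)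

lemma GA_eqI:
  assumes "GA_app g a = GA_app h a" "GA_app g b = GA_app h b" "a < b"
  shows "g = h"
proof -
  obtain n r m s where g: "g = (n, r)" and h: "h = (m, s)"
    by fastforce
  have "2 powi n * (b - a) = (2::real) powi m * (b - a)"
    using assms unfolding g h GA_app_def by (simp add: algebra_simps)
  then have "(2::real) powi n = 2 powi m"
    using assms by simp
  then have "n = m"
    using power_int_strict_increasing[of n m "2::real"] power_int_strict_increasing[of m n "2::real"]
    by (cases n m rule: linorder_cases) auto
  then show ?thesis
    using assms(1) unfolding g h GA_app_def by simp
qed

lemma GA_eq_of_eq_on_ball:
  assumes "e > 0" "\<And>y. y \<in> ball x e \<Longrightarrow> GA_app g y = GA_app h y"
  shows "g = h"
  by (rule GA_eqI[of g x h "x + e / 2"]) (use assms in \<open>auto simp: dist_real_def\<close>)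

lemma GA_eq_of_overlapping_balls:
  assumes "\<forall>z\<in>ball x ex. h z = GA_app \<gamma> z" "\<forall>z\<in>ball y ey. h z = GA_app \<delta> z"
    and "y \<in> ball x ex" "ey > 0"
  shows "\<delta> = \<gamma>"
proof (rule GA_eq_of_eq_on_ball[of "min ey (ex - dist x y)" y])
  show "min ey (ex - dist x y) > 0"
    using assms(3,4) by auto
  fix z
  assume "z \<in> ball y (min ey (ex - dist x y))"
  moreover have "dist x z \<le> dist x y + dist y z"
    by (rule dist_triangle)
  ultimately have "z \<in> ball x ex" "z \<in> ball y ey"
    by simp_all
  then show "GA_app \<delta> z = GA_app \<gamma> z"
    using assms(1,2) by metis
qed

definition locally_GA :: "(real \<Rightarrow> real) \<Rightarrow> real \<Rightarrow> bool" where
  "locally_GA h x \<longleftrightarrow> (\<exists>\<gamma>\<in>GA. \<exists>e>0. \<forall>y\<in>ball x e. h y = GA_app \<gamma> y)"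

lemma locally_GA_comp:
  assumes "locally_GA h x" "locally_GA g (h x)"
  shows "locally_GA (g \<circ> h) x"
proof -
  obtain \<gamma> e1 where \<gamma>: "\<gamma> \<in> GA" "e1 > 0" "\<And>y. y \<in> ball x e1 \<Longrightarrow> h y = GA_app \<gamma> y"
    using assms(1) unfolding locally_GA_def by blast
  obtain \<delta> e2 where \<delta>: "\<delta> \<in> GA" "e2 > 0" "\<And>z. z \<in> ball (h x) e2 \<Longrightarrow> g z = GA_app \<delta> z"
    using assms(2) unfolding locally_GA_def by blast
  define U where "U = ball x e1 \<inter> GA_app \<gamma> -` ball (h x) e2"
  have "open U"
    unfolding U_def using continuous_on_GA_app[of UNIV \<gamma>]
    by (auto simp: continuous_on_open_vimage[OF open_UNIV])
  moreover have "x \<in> U"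
    unfolding U_def using \<gamma> \<delta>(2) by simp
  ultimately obtain e where e: "e > 0" "ball x e \<subseteq> U"
    by (meson open_contains_ball)
  have "(g \<circ> h) y = GA_app (GA_comp \<delta> \<gamma>) y" if "y \<in> ball x e" for y
  proof -
    have "y \<in> U"
      using that e by blast
    then show ?thesis
      using \<gamma>(3) \<delta>(3) by (auto simp: U_def GA_app_comp)
  qed
  then show ?thesis
    unfolding locally_GA_def using e(1) GA_comp_in_GA[OF \<delta>(1) \<gamma>(1)] by blast
qed

lemma locally_GA_on_interval:
  fixes h :: "real \<Rightarrow> real"
  assumes cont: "continuous_on UNIV h" and "a < b"
    and loc: "\<And>x. x \<in> {a<..<b} \<Longrightarrow> locally_GA h x"
  obtains \<gamma> where "\<gamma> \<in> GA" "\<And>y. y \<in> {a..b} \<Longrightarrow> h y = GA_app \<gamma> y"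
proof -
  obtain \<phi> where \<phi>: "\<And>x. x \<in> {a<..<b} \<Longrightarrow>
      \<phi> x \<in> GA \<and> (\<exists>e>0. \<forall>y\<in>ball x e. h y = GA_app (\<phi> x) y)"
    using loc unfolding locally_GA_def by metis
  have "\<phi> constant_on {a<..<b}"
  proof (rule locally_constant_imp_constant)
    fix x
    assume x: "x \<in> {a<..<b}"
    obtain ex where ex: "ex > 0" "\<forall>y\<in>ball x ex. h y = GA_app (\<phi> x) y"
      using \<phi>[OF x] by blast
    have "\<phi> y = \<phi> x" if y: "y \<in> {a<..<b} \<inter> ball x ex" for y
    proof -
      obtain ey where "ey > 0" "\<forall>z\<in>ball y ey. h z = GA_app (\<phi> y) z"
        using \<phi> y by blast
      then show ?thesis
        using GA_eq_of_overlapping_balls[OF ex(2)] y by blast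
    qed
    moreover have "openin (top_of_set {a<..<b}) ({a<..<b} \<inter> ball x ex)"
      by (simp add: openin_open_Int)
    ultimately show "\<exists>T. openin (top_of_set {a<..<b}) T \<and> x \<in> T \<and> (\<forall>y\<in>T. \<phi> y = \<phi> x)"
      using x ex(1) by (metis IntI centre_in_ball)
  qed simp
  then obtain \<gamma> where \<gamma>: "\<And>x. x \<in> {a<..<b} \<Longrightarrow> \<phi> x = \<gamma>"
    unfolding constant_on_def by blast
  have mid: "(a + b) / 2 \<in> {a<..<b}"
    using \<open>a < b\<close> by simp
  have "\<gamma> \<in> GA"
    using \<phi>[OF mid] \<gamma>[OF mid] by simp
  have "{a<..<b} \<subseteq> {x. h x = GA_app \<gamma> x}"
  proof
    fix x
    assume x: "x \<in> {a<..<b}"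
    then obtain e where "e > 0" "\<forall>y\<in>ball x e. h y = GA_app (\<phi> x) y"
      using \<phi> by blast
    then show "x \<in> {x. h x = GA_app \<gamma> x}"
      using \<gamma>[OF x] by simp
  qed
  then have "closure {a<..<b} \<subseteq> {x. h x = GA_app \<gamma> x}"
    by (intro closure_minimal closed_Collect_eq[OF cont continuous_on_GA_app])
  then show ?thesis
    using \<open>a < b\<close> by (intro that[OF \<open>\<gamma> \<in> GA\<close>]) auto
qed

lemma PL_dataD:
  assumes "PL_data h xs gs"
  shows "strict_mono xs" "dyadic (xs n)" "filterlim xs at_top at_top" "filterlim xs at_bot at_bot"
    "gs n \<in> GA" "xs n \<le> y \<Longrightarrow> y \<le> xs (n + 1) \<Longrightarrow> h y = GA_app (gs n) y"
  using assms unfolding PL_data_def by auto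

lemma PL_data_bracket:
  assumes "PL_data h xs gs"
  obtains n where "xs n \<le> x" "x < xs (n + 1)"
  using strict_mono_int_bracket[OF PL_dataD(1,3,4)[OF assms]] by blast

lemma PL_data_strict_mono:
  assumes "PL_data h xs gs"
  shows "strict_mono h"
proof (rule strict_mono_piecewise[OF PL_dataD(1,3,4)[OF assms]])
  fix n
  show "strict_mono_on {xs n..xs (n + 1)} h"
  proof (rule strict_mono_onI)
    fix r s
    assume "r \<in> {xs n..xs (n + 1)}" "s \<in> {xs n..xs (n + 1)}" "r < s"
    then show "h r < h s"
      using PL_dataD(6)[OF assms, of n] by simp
  qed
qed

lemma PL_data_dyadic_image:
  assumes "PL_data h xs gs"
  shows "dyadic (h (xs k))"
proof -
  have "xs k < xs (k + 1)"
    using PL_dataD(1)[OF assms] by (simp add: strict_mono_def)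
  then show ?thesis
    using PL_dataD(6)[OF assms, of k "xs k"] GA_app_dyadic[OF PL_dataD(5,2)[OF assms]] by simp
qed

lemma PL_data_dyadic_preimage:
  assumes "PL_data h xs gs" "dyadic (h b)"
  shows "dyadic b"
proof -
  obtain n where "xs n \<le> b" "b < xs (n + 1)"
    using PL_data_bracket[OF assms(1)] .
  then have "b = GA_app (GA_inv (gs n)) (h b)"
    using PL_dataD(6)[OF assms(1)] by simp
  then show ?thesis
    using GA_app_dyadic[OF GA_inv_in_GA[OF PL_dataD(5)[OF assms(1), of n]] assms(2)] by simp
qed

lemma PL_data_locally_GA:
  assumes "PL_data h xs gs" "x \<notin> range xs"
  shows "locally_GA h x"
proof -
  obtain n where n: "xs n < x" "x < xs (n + 1)"
    using PL_data_bracket[OF assms(1)] assms(2) by (metis order_le_less rangeI)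
  then obtain e where e: "e > 0" "ball x e \<subseteq> {xs n<..<xs (n + 1)}"
    using open_contains_ball_eq[OF open_greaterThanLessThan] by (metis greaterThanLessThan_iff)
  then have "\<forall>y\<in>ball x e. h y = GA_app (gs n) y"
    using PL_dataD(6)[OF assms(1)] by fastforce
  then show ?thesis
    unfolding locally_GA_def using e(1) PL_dataD(5)[OF assms(1)] by blast
qed

lemma PL_data_range_locally_finite:
  assumes "PL_data h xs gs"
  shows "finite (range xs \<inter> {a..c})"
proof -
  obtain n0 where "xs n0 \<le> a"
    using PL_dataD(4)[OF assms] unfolding filterlim_at_bot eventually_at_bot_linorder by blast
  moreover obtain n1 where "c \<le> xs n1"
    using PL_dataD(3)[OF assms] unfolding filterlim_at_top eventually_at_top_linorder by blast
  ultimately have "range xs \<inter> {a..c} \<subseteq> xs ` {n0..n1}"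
  proof (intro subsetI)
    fix z
    assume "xs n0 \<le> a" "c \<le> xs n1" "z \<in> range xs \<inter> {a..c}"
    then obtain k where "z = xs k" "xs n0 \<le> xs k" "xs k \<le> xs n1"
      by auto
    then show "z \<in> xs ` {n0..n1}"
      using strict_mono_less_eq[OF PL_dataD(1)[OF assms]] by auto
  qed
  then show ?thesis
    by (rule finite_subset) simp
qed

lemma PL2_altdef:
  "PL2 = {h. (\<exists>g. homeomorphism UNIV UNIV h g) \<and>
    (\<exists>B. (\<forall>b\<in>B. dyadic b) \<and> (\<forall>a c. finite (B \<inter> {a..c})) \<and> (\<forall>x. x \<notin> B \<longrightarrow> locally_GA h x))}"
  by (simp add: PL2_def locally_GA_def)

lemma PL2_homeomorphism: "h \<in> PL2 \<Longrightarrow> \<exists>h'. homeomorphism UNIV UNIV h h'"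
  unfolding PL2_def by blast

lemma PL2_surj: "h \<in> PL2 \<Longrightarrow> surj h"
  using PL2_homeomorphism[of h] unfolding homeomorphism_def by blast

lemma PL2_PL_data:
  assumes "h \<in> PL2"
  shows "\<exists>xs gs. PL_data h xs gs"
proof -
  have cont: "continuous_on UNIV h"
    using PL2_homeomorphism[OF assms] homeomorphism_def by blast
  obtain B where B: "\<forall>b\<in>B. dyadic b" "\<forall>a c. finite (B \<inter> {a..c})" "\<forall>x. x \<notin> B \<longrightarrow> locally_GA h x"
    using assms unfolding PL2_altdef by blast
  \<comment> \<open>The integers are added so that the break points are unbounded in both directions.\<close>
  define C where "C = B \<union> range real_of_int"
  have "finite (range real_of_int \<inter> {a..c})" for a c
  proof (rule finite_subset)
    show "range real_of_int \<inter> {a..c} \<subseteq> real_of_int ` {\<lfloor>a\<rfloor>..\<lceil>c\<rceil>}"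
      by (auto simp: floor_le_iff le_ceiling_iff)
  qed simp
  then have "finite (C \<inter> {a..c})" for a c
    using B(2) unfolding C_def by (simp add: Int_Un_distrib2)
  then obtain xs :: "int \<Rightarrow> real" where xs: "strict_mono xs" "\<And>k. xs k \<in> C"
      "filterlim xs at_top at_top" "filterlim xs at_bot at_bot"
      "\<And>k c. c \<in> C \<Longrightarrow> \<not> (xs k < c \<and> c < xs (k + 1))"
    using locally_finite_enumeration[of C] unfolding C_def by blast
  have "\<exists>\<gamma>. \<gamma> \<in> GA \<and> (\<forall>y\<in>{xs k..xs (k + 1)}. h y = GA_app \<gamma> y)" for k
  proof (rule locally_GA_on_interval[OF cont])
    show "xs k < xs (k + 1)"
      using xs(1) by (simp add: strict_mono_def)
    show "locally_GA h x" if "x \<in> {xs k<..<xs (k + 1)}" for x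
      using that xs(5) B(3) unfolding C_def by auto
  qed blast
  then obtain gs where "\<forall>k. gs k \<in> GA \<and> (\<forall>y\<in>{xs k..xs (k + 1)}. h y = GA_app (gs k) y)"
    by metis
  moreover have "dyadic (xs k)" for k
    using xs(2)[of k] B(1) unfolding C_def by auto
  ultimately show ?thesis
    unfolding PL_data_def using xs(1,3,4) by blast
qed

lemma PL2_comp:
  assumes "g \<in> PL2" "h \<in> PL2"
  shows "g \<circ> h \<in> PL2"
proof -
  obtain xs gs where h: "PL_data h xs gs"
    using PL2_PL_data[OF assms(2)] by blast
  obtain ys ds where g: "PL_data g ys ds"
    using PL2_PL_data[OF assms(1)] by blast
  have mono: "strict_mono h"
    using PL_data_strict_mono[OF h] .
  define B where "B = range xs \<union> h -` range ys"
  have "dyadic b" if "b \<in> B" for b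
    using that PL_dataD(2)[OF h] PL_dataD(2)[OF g] PL_data_dyadic_preimage[OF h]
    unfolding B_def by auto
  moreover have "finite (B \<inter> {a..c})" for a c
    using PL_data_range_locally_finite[OF h]
      strict_mono_vimage_locally_finite[OF mono PL_data_range_locally_finite[OF g]]
    by (simp add: B_def Int_Un_distrib2)
  moreover have "locally_GA (g \<circ> h) x" if "x \<notin> B" for x
    using that PL_data_locally_GA[OF h] PL_data_locally_GA[OF g] locally_GA_comp
    unfolding B_def by blast
  moreover have "\<exists>k. homeomorphism UNIV UNIV (g \<circ> h) k"
    using PL2_homeomorphism[OF assms(1)] PL2_homeomorphism[OF assms(2)]
    by (metis homeomorphism_compose)
  ultimately show ?thesis
    unfolding PL2_altdef by blast
qed

locale increasing_homeo =
  fixes f :: "real \<Rightarrow> real"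
  assumes f_HomeoPlus: "f \<in> HomeoPlus"
begin

abbreviation F :: "int \<Rightarrow> real \<Rightarrow> real" where
  "F \<equiv> fpow f"

lemma strict_mono_f: "strict_mono f"
  using f_HomeoPlus unfolding HomeoPlus_def by blast

lemma f_homeomorphism: obtains g where "homeomorphism UNIV UNIV f g"
  using f_HomeoPlus unfolding HomeoPlus_def by blast

lemma bij_f: "bij f"
proof -
  obtain g where "homeomorphism UNIV UNIV f g"
    using f_homeomorphism .
  then show ?thesis
    using strict_mono_imp_inj_on[OF strict_mono_f] unfolding bij_def homeomorphism_def by blast
qed

lemma f_inv_f_eq [simp]: "f (inv f x) = x"
  using bij_f by (simp add: bij_is_surj surj_f_inv_f)

lemma inv_f_f_eq [simp]: "inv f (f x) = x"
  using bij_f by (simp add: bij_is_inj)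

lemma strict_mono_inv_f: "strict_mono (inv f)"
  by (rule strict_monoI) (metis f_inv_f_eq strict_mono_f strict_mono_less)

lemma continuous_on_f: "continuous_on UNIV f"
proof -
  obtain g where "homeomorphism UNIV UNIV f g"
    using f_homeomorphism .
  then show ?thesis
    unfolding homeomorphism_def by blast
qed

lemma continuous_on_inv_f: "continuous_on UNIV (inv f)"
proof -
  obtain g where g: "homeomorphism UNIV UNIV f g"
    using f_homeomorphism .
  then have "inv f = g"
    by (metis ext inv_f_f_eq homeomorphism_def UNIV_I)
  then show ?thesis
    using g unfolding homeomorphism_def by blast
qed

lemma fpow_succ: "F (n + 1) = f \<circ> F n"
proof (cases "n \<ge> 0")
  case True
  then have "nat (n + 1) = Suc (nat n)"
    by simp
  then show ?thesis
    using True by (simp add: fpow_def)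
next
  case False
  show ?thesis
  proof (cases "n = -1")
    case True
    then show ?thesis
      by (auto simp: fpow_def fun_eq_iff)
  next
    case _: False
    then have "nat (- n) = Suc (nat (- (n + 1)))"
      using \<open>\<not> n \<ge> 0\<close> by simp
    then show ?thesis
      using \<open>\<not> n \<ge> 0\<close> \<open>n \<noteq> -1\<close> by (simp add: fpow_def fun_eq_iff)
  qed
qed

lemma fpow_pred: "F (n - 1) = inv f \<circ> F n"
  using fpow_succ[of "n - 1"] by (auto simp: fun_eq_iff)

lemma fpow_0 [simp]: "F 0 = id"
  by (simp add: fpow_def)

lemma fpow_add: "F (m + n) x = F m (F n x)"
proof (induction m rule: int_induct[where k = 0])
  case (step1 i)
  then show ?case
    using fpow_succ[of "i + n"] fpow_succ[of i] by (simp add: algebra_simps)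
next
  case (step2 i)
  then show ?case
    using fpow_pred[of "i + n"] fpow_pred[of i] by (simp add: algebra_simps)
qed simp

lemma fpow_fpow_neg [simp]: "F n (F (- n) x) = x"
  using fpow_add[of n "- n" x] by simp

lemma fpow_neg_fpow [simp]: "F (- n) (F n x) = x"
  using fpow_add[of "- n" n x] by simp

lemma strict_mono_fpow: "strict_mono (F n)"
proof (induction n rule: int_induct[where k = 0])
  case (step1 i)
  then show ?case
    using fpow_succ[of i] strict_mono_f by (simp add: strict_mono_def)
next
  case (step2 i)
  then show ?case
    using fpow_pred[of i] strict_mono_inv_f by (simp add: strict_mono_def)
qed (simp add: strict_mono_def)

lemma fpow_less_iff [simp]: "F n x < F n y \<longleftrightarrow> x < y"
  using strict_mono_fpow strict_mono_less by blast

lemma continuous_on_fpow: "continuous_on S (F n)"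
proof -
  have "continuous_on UNIV (F n)"
  proof (induction n rule: int_induct[where k = 0])
    case (step1 i)
    then show ?case
      using fpow_succ[of i] continuous_on_f
      by (metis continuous_on_compose continuous_on_subset top_greatest)
  next
    case (step2 i)
    then show ?case
      using fpow_pred[of i] continuous_on_inv_f
      by (metis continuous_on_compose continuous_on_subset top_greatest)
  qed (simp add: id_def)
  then show ?thesis
    by (rule continuous_on_subset) simp
qed

end

locale doubling_homeo = increasing_homeo +
  assumes f_add_one: "\<And>x. f (x + 1) = f x + 2"
    and f_zero: "f 0 = 0"
begin

lemma f_add_of_int: "f (x + of_int k) = f x + 2 * of_int k"
proof (induction k rule: int_induct[where k = 0])
  case (step1 i)
  then show ?case
    using f_add_one[of "x + of_int i"] by (simp add: algebra_simps)
next
  case (step2 i)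
  then show ?case
    using f_add_one[of "x + of_int (i - 1)"] by (simp add: algebra_simps)
qed simp

lemma fpow_add_of_int: "F (int n) (x + of_int k) = F (int n) x + 2 ^ n * of_int k"
proof (induction n arbitrary: x k)
  case (Suc n)
  have F_Suc: "F (int (Suc n)) = f \<circ> F (int n)"
    using fpow_succ[of "int n"] by (simp add: add.commute)
  have "F (int (Suc n)) (x + of_int k) = f (F (int n) x + of_int (2 ^ n * k))"
    using F_Suc Suc by simp
  also have "\<dots> = F (int (Suc n)) x + 2 ^ Suc n * of_int k"
    using f_add_of_int[of "F (int n) x" "2 ^ n * k"] F_Suc by simp
  finally show ?case .
qed simp

lemma fpow_zero [simp]: "F n 0 = 0"
proof (induction n rule: int_induct[where k = 0])
  case (step1 i)
  then show ?case
    using fpow_succ[of i] f_zero by simp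
next
  case (step2 i)
  then show ?case
    using fpow_pred[of i] f_zero by (metis comp_apply inv_f_f_eq)
qed simp

text \<open>theta_f(T_r): for r = p/2^q we have T_r = D^-q T_p D^q, so theta_f(T_r) = f^-q T_p f^q.\<close>

definition theta_T :: "real \<Rightarrow> real \<Rightarrow> real" where
  "theta_T r t = (case dyrep r of (p, q) \<Rightarrow> F (- int q) (F (int q) t + of_int p))"

lemma theta_GA_theta_T: "theta_GA f g t = theta_T (snd g) (F (fst g) t)"
  unfolding theta_GA_def theta_T_def by simp

lemma dybar_theta_T: "dybar f r = theta_T r 0"
  unfolding dybar_def theta_T_def by (simp add: case_prod_beta)

lemma conj_translation_expand:
  "F (- int (q + j)) (F (int (q + j)) t + 2 ^ j * of_int p) = F (- int q) (F (int q) t + of_int p)"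
proof -
  have "F (int (q + j)) t = F (int j) (F (int q) t)"
    using fpow_add[of "int j" "int q" t] by (simp add: add.commute)
  then have "F (int (q + j)) t + 2 ^ j * of_int p = F (int j) (F (int q) t + of_int p)"
    using fpow_add_of_int by simp
  moreover have "F (- int (q + j)) (F (int j) z) = F (- int q) z" for z
    using fpow_add[of "- int (q + j)" "int j" z] by simp
  ultimately show ?thesis
    by simp
qed

text \<open>Independence of the representation r = p/2^q: this is where f (x + 1) = f x + 2 enters.\<close>

lemma theta_T_frac:
  assumes "r = of_int p / 2 ^ q"
  shows "theta_T r t = F (- int q) (F (int q) t + of_int p)"
proof -
  obtain P Q where PQ: "dyrep r = (P, Q)"
    by fastforce
  have "r = of_int P / 2 ^ Q"
    using dyadic_dyrep[of r] dyadic_frac[of p q] assms PQ by simp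
  then have "real_of_int (P * 2 ^ q) = real_of_int (p * 2 ^ Q)"
    using assms by (simp add: field_simps)
  then have "P * 2 ^ q = p * 2 ^ Q"
    by (simp only: of_int_eq_iff)
  then have "F (- int (Q + q)) (F (int (Q + q)) t + 2 ^ q * of_int P) =
             F (- int (q + Q)) (F (int (q + Q)) t + 2 ^ Q * of_int p)"
    by (simp add: add.commute mult.commute)
       (metis (mono_tags, opaque_lifting) of_int_mult of_int_numeral of_int_power)
  then show ?thesis
    unfolding theta_T_def PQ using conj_translation_expand by simp
qed

lemma theta_T_add:
  assumes "dyadic r" "dyadic s"
  shows "theta_T r (theta_T s t) = theta_T (r + s) t"
proof -
  obtain p p' q where r: "r = of_int p / 2 ^ q" and s: "s = of_int p' / 2 ^ q"
    using dyadic_common_denominator[OF assms] .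
  have "r + s = of_int (p' + p) / 2 ^ q"
    using r s by (simp add: add_divide_distrib)
  then have "theta_T (r + s) t = F (- int q) (F (int q) t + of_int (p' + p))"
    by (rule theta_T_frac)
  moreover have "theta_T r (theta_T s t) =
      F (- int q) (F (int q) (F (- int q) (F (int q) t + of_int p')) + of_int p)"
    using theta_T_frac[OF r] theta_T_frac[OF s] by simp
  ultimately show ?thesis
    by (simp add: add.assoc)
qed

lemma fpow_theta_T:
  assumes "dyadic r"
  shows "F n (theta_T r t) = theta_T (2 powi n * r) (F n t)"
proof -
  obtain p q where "r = of_int p / 2 ^ q"
    using assms unfolding dyadic_def by blast
  define Q where "Q = q + nat \<bar>n\<bar>"
  define P where "P = p * 2 ^ nat \<bar>n\<bar>"
  have r: "r = of_int P / 2 ^ Q"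
    using \<open>r = of_int p / 2 ^ q\<close> frac_pow2_expand[of p q "nat \<bar>n\<bar>"] by (simp add: P_def Q_def)
  define Q' where "Q' = nat (int Q - n)"
  have Q': "int Q' = int Q - n"
    unfolding Q'_def Q_def by simp
  have "F n (theta_T r t) = F n (F (- int Q) (F (int Q) t + of_int P))"
    using theta_T_frac[OF r] by simp
  also have "\<dots> = F (- int Q') (F (int Q) t + of_int P)"
  proof -
    have "n + - int Q = - int Q'"
      using Q' by simp
    then show ?thesis
      by (simp only: fpow_add[symmetric])
  qed
  also have "F (int Q) t = F (int Q') (F n t)"
    using fpow_add[of "int Q'" n t] Q' by simp
  also have "F (- int Q') (F (int Q') (F n t) + of_int P) = theta_T (of_int P / 2 ^ Q') (F n t)"
    using theta_T_frac[of "of_int P / 2 ^ Q'" P Q'] by simp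
  also have "of_int P / 2 ^ Q' = 2 powi n * r"
  proof -
    have "(2::real) powi n * 2 powi (int Q') = 2 powi (n + int Q')"
      using power_int_add[of "2::real" n "int Q'"] by simp
    also have "n + int Q' = int Q"
      using Q' by simp
    finally have "(2::real) powi n * 2 ^ Q' = 2 ^ Q"
      by simp
    then have "2 powi n * r = 2 powi n * (of_int P / (2 powi n * (2::real) ^ Q'))"
      using r by simp
    also have "\<dots> = of_int P / 2 ^ Q'"
      by (simp add: divide_simps)
    finally show ?thesis
      by (rule sym)
  qed
  finally show ?thesis .
qed

lemma strict_mono_theta_T: "strict_mono (theta_T r)"
  unfolding theta_T_def by (auto simp: strict_mono_def case_prod_beta)

lemma continuous_on_theta_T: "continuous_on S (theta_T r)"
proof -
  have "continuous_on S (F a \<circ> ((\<lambda>y. y + c) \<circ> F b))" for a b c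
    by (intro continuous_on_compose continuous_on_fpow continuous_intros)
  then show ?thesis
    unfolding theta_T_def by (simp add: case_prod_beta o_def)
qed

lemma theta_GA_comp:
  assumes "g \<in> GA" "h \<in> GA"
  shows "theta_GA f (GA_comp g h) t = theta_GA f g (theta_GA f h t)"
proof -
  obtain n r m s where g: "g = (n, r)" and h: "h = (m, s)"
    by fastforce
  have r: "dyadic r" and s: "dyadic s"
    using assms g h unfolding GA_def by auto
  have "theta_GA f g (theta_GA f h t) = theta_T r (F n (theta_T s (F m t)))"
    by (simp add: theta_GA_theta_T g h)
  also have "\<dots> = theta_T r (theta_T (2 powi n * s) (F n (F m t)))"
    using fpow_theta_T[OF s] by simp
  also have "\<dots> = theta_T (r + 2 powi n * s) (F (n + m) t)"
    using theta_T_add[OF r dyadic_powi_mult[OF s]] fpow_add by simp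
  finally show ?thesis
    by (simp add: theta_GA_theta_T g h GA_comp_def add.commute)
qed

lemma theta_GA_dybar:
  assumes "g \<in> GA" "dyadic x"
  shows "theta_GA f g (dybar f x) = dybar f (GA_app g x)"
proof -
  obtain n r where g: "g = (n, r)"
    by fastforce
  have r: "dyadic r"
    using assms g unfolding GA_def by auto
  have "theta_GA f g (dybar f x) = theta_T r (F n (theta_T x 0))"
    by (simp add: theta_GA_theta_T g dybar_theta_T)
  also have "\<dots> = theta_T r (theta_T (2 powi n * x) 0)"
    using fpow_theta_T[OF assms(2)] by simp
  also have "\<dots> = theta_T (r + 2 powi n * x) 0"
    using theta_T_add[OF r dyadic_powi_mult[OF assms(2)]] by simp
  finally show ?thesis
    by (simp add: dybar_theta_T g GA_app_def add.commute)
qed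

lemma strict_mono_theta_GA: "strict_mono (theta_GA f g)"
  using strict_mono_theta_T strict_mono_fpow unfolding theta_GA_theta_T strict_mono_def by simp

lemma theta_GA_less_iff [simp]: "theta_GA f g x < theta_GA f g y \<longleftrightarrow> x < y"
  using strict_mono_theta_GA strict_mono_less by blast

lemma theta_GA_le_iff [simp]: "theta_GA f g x \<le> theta_GA f g y \<longleftrightarrow> x \<le> y"
  using strict_mono_theta_GA strict_mono_less_eq by blast

lemma continuous_on_theta_GA: "continuous_on S (theta_GA f g)"
  unfolding theta_GA_theta_T[abs_def]
  by (rule continuous_on_compose2[OF continuous_on_theta_T continuous_on_fpow]) auto

lemma dybar_of_int [simp]: "dybar f (of_int k) = of_int k"
  using theta_T_frac[of "of_int k" k 0 0] by (simp add: dybar_theta_T)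

lemma dybar_less_iff:
  assumes "dyadic x" "dyadic y"
  shows "dybar f x < dybar f y \<longleftrightarrow> x < y"
proof -
  obtain p p' q where x: "x = of_int p / 2 ^ q" and y: "y = of_int p' / 2 ^ q"
    using dyadic_common_denominator[OF assms] .
  show ?thesis
    using theta_T_frac[OF x, of 0] theta_T_frac[OF y, of 0] by (simp add: dybar_theta_T x y divide_less_cancel)
qed

lemma dybar_le_iff:
  assumes "dyadic x" "dyadic y"
  shows "dybar f x \<le> dybar f y \<longleftrightarrow> x \<le> y"
  using dybar_less_iff[OF assms(2,1)] by (simp add: not_less[symmetric])

lemma dybar_max:
  "dyadic x \<Longrightarrow> dyadic y \<Longrightarrow> dybar f (max x y) = max (dybar f x) (dybar f y)"
  by (auto simp: max_def dybar_le_iff)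

lemma dybar_min:
  "dyadic x \<Longrightarrow> dyadic y \<Longrightarrow> dybar f (min x y) = min (dybar f x) (dybar f y)"
  by (auto simp: min_def dybar_le_iff)

lemma dybar_bounds:
  assumes "dyadic x"
  shows "x - 1 \<le> dybar f x" "dybar f x \<le> x + 1"
proof -
  have "of_int \<lfloor>x\<rfloor> \<le> dybar f x"
    using dybar_le_iff[OF dyadic_of_int assms, of "\<lfloor>x\<rfloor>"] by simp
  then show "x - 1 \<le> dybar f x"
    using real_of_int_floor_gt_diff_one[of x] by linarith
  have "dybar f x \<le> of_int \<lceil>x\<rceil>"
    using dybar_le_iff[OF assms dyadic_of_int, of "\<lceil>x\<rceil>"] by simp
  then show "dybar f x \<le> x + 1"
    using of_int_ceiling_le_add_one[of x] by linarith
qed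

lemma filterlim_dybar:
  assumes "\<And>n. dyadic (a n)"
  shows "filterlim a at_top L \<Longrightarrow> filterlim (\<lambda>n. dybar f (a n)) at_top L"
    and "filterlim a at_bot L \<Longrightarrow> filterlim (\<lambda>n. dybar f (a n)) at_bot L"
proof -
  assume "filterlim a at_top L"
  then have "filterlim (\<lambda>n. - 1 + a n) at_top L"
    by (rule filterlim_tendsto_add_at_top[OF tendsto_const])
  moreover have "\<forall>n. - 1 + a n \<le> dybar f (a n)"
    using dybar_bounds(1)[OF assms] by (smt (verit))
  ultimately show "filterlim (\<lambda>n. dybar f (a n)) at_top L"
    by (rule filterlim_at_top_mono[OF _ always_eventually])
next
  assume "filterlim a at_bot L"
  then have "filterlim (\<lambda>n. - a n) at_top L"
    by (rule filterlim_uminus_at_bot[THEN iffD1])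
  then have "filterlim (\<lambda>n. - 1 + - a n) at_top L"
    by (rule filterlim_tendsto_add_at_top[OF tendsto_const])
  moreover have "\<forall>n. - 1 + - a n \<le> - dybar f (a n)"
    using dybar_bounds(2)[OF assms] by (smt (verit))
  ultimately have "filterlim (\<lambda>n. - dybar f (a n)) at_top L"
    by (rule filterlim_at_top_mono[OF _ always_eventually])
  then show "filterlim (\<lambda>n. dybar f (a n)) at_bot L"
    by (rule filterlim_uminus_at_bot[THEN iffD2])
qed

lemma PL_data_dybar:
  assumes "PL_data h xs gs"
  shows "strict_mono (\<lambda>n. dybar f (xs n))"
    "filterlim (\<lambda>n. dybar f (xs n)) at_top at_top" "filterlim (\<lambda>n. dybar f (xs n)) at_bot at_bot"
proof -
  show "strict_mono (\<lambda>n. dybar f (xs n))"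
    using PL_dataD(1,2)[OF assms] by (simp add: strict_mono_def dybar_less_iff)
  show "filterlim (\<lambda>n. dybar f (xs n)) at_top at_top"
    by (rule filterlim_dybar(1)[OF PL_dataD(2)[OF assms] PL_dataD(3)[OF assms]])
  show "filterlim (\<lambda>n. dybar f (xs n)) at_bot at_bot"
    by (rule filterlim_dybar(2)[OF PL_dataD(2)[OF assms] PL_dataD(4)[OF assms]])
qed

lemma theta_PL_on_pieces:
  assumes "h \<in> PL2"
  obtains xs gs where "PL_data h xs gs"
    "\<And>n t. dybar f (xs n) \<le> t \<Longrightarrow> t < dybar f (xs (n + 1)) \<Longrightarrow> theta_PL f h t = theta_GA f (gs n) t"
proof -
  define d where "d = (SOME d. PL_data h (fst d) (snd d))"
  obtain xs gs where d: "d = (xs, gs)"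
    by fastforce
  have "PL_data h (fst d) (snd d)"
    unfolding d_def by (rule someI_ex) (use PL2_PL_data[OF assms] in auto)
  then have pd: "PL_data h xs gs"
    using d by simp
  have "theta_PL f h t = theta_GA f (gs n) t" if "dybar f (xs n) \<le> t" "t < dybar f (xs (n + 1))" for n t
  proof -
    have "(SOME n. dybar f (xs n) \<le> t \<and> t < dybar f (xs (n + 1))) = n"
      by (rule some1_equality[OF strict_mono_int_bracket[OF PL_data_dybar[OF pd]]]) (use that in simp)
    then show ?thesis
      unfolding theta_PL_def d_def[symmetric] d by simp
  qed
  then show ?thesis
    by (rule that[OF pd])
qed

definition piece_at :: "(real \<Rightarrow> real) \<Rightarrow> int \<times> real \<Rightarrow> real \<Rightarrow> bool" where
  "piece_at h \<gamma> t \<longleftrightarrow> \<gamma> \<in> GA \<and> (\<exists>a b. dyadic a \<and> dyadic b \<and> dybar f a \<le> t \<and> t \<le> dybar f b \<and>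
     (\<forall>y\<in>{a..b}. h y = GA_app \<gamma> y))"

lemma PL_data_piece_at:
  assumes "PL_data h xs gs" "dybar f (xs n) \<le> t" "t \<le> dybar f (xs (n + 1))"
  shows "piece_at h (gs n) t"
  unfolding piece_at_def using assms PL_dataD(2,5,6)[OF assms(1)]
  by (intro conjI exI[of _ "xs n"] exI[of _ "xs (n + 1)"]) auto

lemma theta_GA_eq_on_dybar_interval:
  assumes "\<gamma> \<in> GA" "\<delta> \<in> GA" "dyadic c" "dyadic d" "\<forall>y\<in>{c..d}. GA_app \<gamma> y = GA_app \<delta> y"
    and t: "dybar f c \<le> t" "t \<le> dybar f d"
  shows "theta_GA f \<gamma> t = theta_GA f \<delta> t"
proof (cases "c < d")
  case True
  then have "\<gamma> = \<delta>"
    using GA_eqI[of \<gamma> c \<delta> d] assms(5) by simp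
  then show ?thesis
    by simp
next
  case False
  moreover have "c \<le> d"
    using t dybar_le_iff[OF assms(3,4)] by linarith
  ultimately have "t = dybar f c"
    using t by simp
  then show ?thesis
    using theta_GA_dybar[OF assms(1,3)] theta_GA_dybar[OF assms(2,3)] assms(5) \<open>c \<le> d\<close> by simp
qed

lemma theta_PL_eq_theta_GA:
  assumes "h \<in> PL2" "piece_at h \<gamma> t"
  shows "theta_PL f h t = theta_GA f \<gamma> t"
proof -
  obtain a b where ab: "\<gamma> \<in> GA" "dyadic a" "dyadic b" "dybar f a \<le> t" "t \<le> dybar f b"
      "\<forall>y\<in>{a..b}. h y = GA_app \<gamma> y"
    using assms(2) unfolding piece_at_def by blast
  obtain xs gs where pd: "PL_data h xs gs" and pieces:
      "\<And>n t. dybar f (xs n) \<le> t \<Longrightarrow> t < dybar f (xs (n + 1)) \<Longrightarrow> theta_PL f h t = theta_GA f (gs n) t"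
    using theta_PL_on_pieces[OF assms(1)] by blast
  obtain n where n: "dybar f (xs n) \<le> t" "t < dybar f (xs (n + 1))"
    using strict_mono_int_bracket[OF PL_data_dybar[OF pd]] by blast
  define c where "c = max (xs n) a"
  define d where "d = min (xs (n + 1)) b"
  have cd: "dyadic c" "dyadic d"
    unfolding c_def d_def using ab PL_dataD(2)[OF pd] by (simp_all add: max_def min_def)
  have "dybar f c \<le> t" "t \<le> dybar f d"
    unfolding c_def d_def using ab n PL_dataD(2)[OF pd] by (simp_all add: dybar_max dybar_min)
  moreover have "\<forall>y\<in>{c..d}. GA_app (gs n) y = GA_app \<gamma> y"
  proof
    fix y
    assume "y \<in> {c..d}"
    then show "GA_app (gs n) y = GA_app \<gamma> y"
      using ab(6) PL_dataD(6)[OF pd, of n y] unfolding c_def d_def by simp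
  qed
  ultimately have "theta_GA f (gs n) t = theta_GA f \<gamma> t"
    using theta_GA_eq_on_dybar_interval[OF PL_dataD(5)[OF pd] ab(1) cd] by blast
  then show ?thesis
    using pieces[OF n] by simp
qed

lemma piece_at_PL2:
  assumes "h \<in> PL2"
  obtains \<gamma> where "piece_at h \<gamma> t"
proof -
  obtain xs gs where pd: "PL_data h xs gs"
    using PL2_PL_data[OF assms] by blast
  obtain n where n: "dybar f (xs n) \<le> t" "t < dybar f (xs (n + 1))"
    using strict_mono_int_bracket[OF PL_data_dybar[OF pd]] by blast
  show ?thesis
    using PL_data_piece_at[OF pd n(1)] n(2) by (intro that) simp
qed

lemma dybar_GA_inv_le_iff:
  assumes "\<gamma> \<in> GA" "dyadic c"
  shows "dybar f (GA_app (GA_inv \<gamma>) c) \<le> t \<longleftrightarrow> dybar f c \<le> theta_GA f \<gamma> t"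
    and "t \<le> dybar f (GA_app (GA_inv \<gamma>) c) \<longleftrightarrow> theta_GA f \<gamma> t \<le> dybar f c"
proof -
  have "theta_GA f \<gamma> (dybar f (GA_app (GA_inv \<gamma>) c)) = dybar f c"
    using theta_GA_dybar[OF assms(1) GA_app_dyadic[OF GA_inv_in_GA[OF assms(1)] assms(2)]] by simp
  then show "dybar f (GA_app (GA_inv \<gamma>) c) \<le> t \<longleftrightarrow> dybar f c \<le> theta_GA f \<gamma> t"
    and "t \<le> dybar f (GA_app (GA_inv \<gamma>) c) \<longleftrightarrow> theta_GA f \<gamma> t \<le> dybar f c"
    by (metis theta_GA_le_iff)+
qed

lemma piece_at_comp:
  assumes h: "piece_at h \<gamma> t" and g: "piece_at g \<delta> (theta_GA f \<gamma> t)"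
  shows "piece_at (g \<circ> h) (GA_comp \<delta> \<gamma>) t"
proof -
  obtain a b where ab: "\<gamma> \<in> GA" "dyadic a" "dyadic b" "dybar f a \<le> t" "t \<le> dybar f b"
      "\<forall>y\<in>{a..b}. h y = GA_app \<gamma> y"
    using h unfolding piece_at_def by blast
  obtain c d where cd: "\<delta> \<in> GA" "dyadic c" "dyadic d" "dybar f c \<le> theta_GA f \<gamma> t"
      "theta_GA f \<gamma> t \<le> dybar f d" "\<forall>z\<in>{c..d}. g z = GA_app \<delta> z"
    using g unfolding piece_at_def by blast
  define c' where "c' = GA_app (GA_inv \<gamma>) c"
  define d' where "d' = GA_app (GA_inv \<gamma>) d"
  have dy: "dyadic c'" "dyadic d'"
    unfolding c'_def d'_def using GA_app_dyadic GA_inv_in_GA ab(1) cd(2,3) by auto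
  have "dybar f (max a c') \<le> t" "t \<le> dybar f (min b d')"
    using ab(2-5) cd(2-5) dy dybar_GA_inv_le_iff[OF ab(1)] unfolding c'_def d'_def
    by (simp_all add: dybar_max dybar_min)
  moreover have "(g \<circ> h) y = GA_app (GA_comp \<delta> \<gamma>) y" if "y \<in> {max a c'..min b d'}" for y
  proof -
    have "c \<le> GA_app \<gamma> y" "GA_app \<gamma> y \<le> d"
      using that GA_app_le_iff[of \<gamma> c' y] GA_app_le_iff[of \<gamma> y d'] unfolding c'_def d'_def by auto
    then show ?thesis
      using that ab(6) cd(6) by (simp add: GA_app_comp)
  qed
  ultimately show ?thesis
    unfolding piece_at_def using GA_comp_in_GA[OF cd(1) ab(1)] dy ab(2,3)
    by (intro conjI exI[of _ "max a c'"] exI[of _ "min b d'"]) (auto simp: max_def min_def)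
qed

theorem theta_PL_comp:
  assumes "g \<in> PL2" "h \<in> PL2"
  shows "theta_PL f (g \<circ> h) t = theta_PL f g (theta_PL f h t)"
proof -
  obtain \<gamma> where \<gamma>: "piece_at h \<gamma> t"
    using piece_at_PL2[OF assms(2)] .
  obtain \<delta> where \<delta>: "piece_at g \<delta> (theta_GA f \<gamma> t)"
    using piece_at_PL2[OF assms(1)] .
  have "theta_PL f (g \<circ> h) t = theta_GA f (GA_comp \<delta> \<gamma>) t"
    using theta_PL_eq_theta_GA[OF PL2_comp[OF assms] piece_at_comp[OF \<gamma> \<delta>]] .
  also have "\<dots> = theta_GA f \<delta> (theta_GA f \<gamma> t)"
    using \<gamma> \<delta> theta_GA_comp unfolding piece_at_def by blast
  also have "\<dots> = theta_PL f g (theta_PL f h t)"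
    using theta_PL_eq_theta_GA[OF assms(1) \<delta>] theta_PL_eq_theta_GA[OF assms(2) \<gamma>] by simp
  finally show ?thesis .
qed

theorem theta_PL_HomeoPlus:
  assumes "h \<in> PL2"
  shows "theta_PL f h \<in> HomeoPlus"
proof -
  obtain xs gs where pd: "PL_data h xs gs"
    using PL2_PL_data[OF assms] by blast
  let ?X = "\<lambda>n. dybar f (xs n)"
  have on_piece: "theta_PL f h t = theta_GA f (gs n) t" if "?X n \<le> t" "t \<le> ?X (n + 1)" for n t
    using theta_PL_eq_theta_GA[OF assms PL_data_piece_at[OF pd that]] .
  have "?X n \<le> ?X (n + 1)" for n
    using strict_mono_less_eq[OF PL_data_dybar(1)[OF pd]] by simp
  then have at_X: "theta_PL f h (?X n) = dybar f (h (xs n))" for n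
    using on_piece[of n "?X n"] theta_GA_dybar[OF PL_dataD(5,2)[OF pd]] PL_dataD(6)[OF pd, of n "xs n"]
      strict_mono_less_eq[OF PL_dataD(1)[OF pd], of n "n + 1"] by simp
  have "filterlim h at_top at_top" "filterlim h at_bot at_bot"
    using strict_mono_surj_filterlim[OF PL_data_strict_mono[OF pd] PL2_surj[OF assms]] by auto
  then have top: "filterlim (\<lambda>n. h (xs n)) at_top at_top" and bot: "filterlim (\<lambda>n. h (xs n)) at_bot at_bot"
    using filterlim_compose PL_dataD(3,4)[OF pd] by blast+
  have "filterlim (\<lambda>n. theta_PL f h (?X n)) at_top at_top"
    unfolding at_X by (rule filterlim_dybar(1)[OF PL_data_dyadic_image[OF pd] top])
  moreover have "filterlim (\<lambda>n. theta_PL f h (?X n)) at_bot at_bot"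
    unfolding at_X by (rule filterlim_dybar(2)[OF PL_data_dyadic_image[OF pd] bot])
  moreover have "strict_mono_on {?X n..?X (n + 1)} (theta_PL f h)" for n
  proof (rule strict_mono_onI)
    fix r s
    assume "r \<in> {?X n..?X (n + 1)}" "s \<in> {?X n..?X (n + 1)}" "r < s"
    then show "theta_PL f h r < theta_PL f h s"
      using on_piece[of n r] on_piece[of n s] by simp
  qed
  moreover have "continuous_on {?X n..?X (n + 1)} (theta_PL f h)" for n
    by (rule continuous_on_eq[OF continuous_on_theta_GA[of _ "gs n"]]) (use on_piece in auto)
  ultimately show ?thesis
    using piecewise_HomeoPlus[OF PL_data_dybar[OF pd]] by blast
qed

end

theorem mainTheorem6:
  fixes f :: "real \<Rightarrow> real"
  assumes "f \<in> HomeoPlus"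
    and "\<And>x. f (x + 1) = f x + 2"
    and "f 0 = 0"
  shows "(\<forall>h\<in>PL2. theta_PL f h \<in> HomeoPlus) \<and>
         (\<forall>g\<in>PL2. \<forall>h\<in>PL2. theta_PL f (g \<circ> h) = theta_PL f g \<circ> theta_PL f h)"
proof -
  interpret doubling_homeo f
    using assms by unfold_locales
  show ?thesis
    using theta_PL_HomeoPlus theta_PL_comp by (auto simp: fun_eq_iff)
qed

end
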